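(* Let $d\ge 1$ and let $P\in\mathbb{C}[x]$ be a degree-$d$ polynomial such that: $P$ has parity $(d\bmod 2)$; $|P(x)|\le 1$ for all $x\in[-1,1]$; $|P(x)|\ge 1$ for all $x\in(-\infty,-1]\cup[1,\infty)$; and if $d$ is even then $P(ix)P^*(ix)\ge 1$ for all $x\in\mathbb{R}$. Then there exists $\Phi=(\phi_1,\ldots,\phi_d)\in\mathbb{R}^d$ such that for all $x\in[-1,1]$ the top-left entry of $\prod_{j=1}^{d}\left(e^{i\phi_j\sigma_z}R(x)\right)$ equals $P(x)$. Moreover, for $x\in\{-1,1\}$ we have $P(x)=x^d\prod_{j=1}^de^{i\phi_j}$, and if $d$ is even then $P(0)=e^{-i\sum_{j=1}^d(-1)^j\phi_j}$.
   Context: $\sigma_z=\mathrm{diag}(1,-1)$. For $x\in[-1,1]$, $R(x)=\begin{pmatrix} x & \sqrt{1-x^2}\\ \sqrt{1-x^2} & -x\end{pmatrix}$. $\prod_{j=1}^d M_j=M_1M_2\cdots M_d$. For $P(x)=\sum_j a_jx^j$, $P^*(x)=\sum_j\overline{a_j}x^j$. Parity $(d\bmod 2)$ means $P$ is even if $d$ is even and odd if $d$ is odd. *)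

theory Defs
  imports "HOL-Analysis.Analysis" "HOL-Computational_Algebra.Polynomial"
begin

definition expSigmaZ :: "real \<Rightarrow> complex^2^2" where
  "expSigmaZ \<phi> = (\<chi> a b. if a = b then (if a = 1 then exp (\<i> * of_real \<phi>) else exp (- \<i> * of_real \<phi>)) else 0)"

definition Rmat :: "real \<Rightarrow> complex^2^2" where
  "Rmat x = (\<chi> a b. if a = 1 \<and> b = 1 then of_real x
                     else if a = 2 \<and> b = 2 then - of_real x
                     else of_real (sqrt (1 - x\<^sup>2)))"

text \<open>Ordered product prod_{j=1}^d (exp(i phi_j sigma_z) R(x)) = M_1 M_2 ... M_d,
  where the phase list is [phi_1, ..., phi_d].\<close>
definition qspProd :: "real list \<Rightarrow> real \<Rightarrow> complex^2^2" where
  "qspProd \<Phi> x = foldr (\<lambda>\<phi> M. (expSigmaZ \<phi> ** Rmat x) ** M) \<Phi> (mat 1)"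

definition conj_poly :: "complex poly \<Rightarrow> complex poly" where
  "conj_poly P = map_poly cnj P"

definition has_parity :: "complex poly \<Rightarrow> nat \<Rightarrow> bool" where
  "has_parity P d \<longleftrightarrow> (\<forall>z. poly P (- z) = (-1) ^ d * poly P z)"

end

theory Submission
  imports Defs "HOL-Computational_Algebra.Fundamental_Theorem_Algebra"
begin

text \<open>
  First complete \<open>P\<close> to a pair \<open>(P, Q)\<close> with \<open>P P\<^sup>* + (1 - x\<^sup>2) Q Q\<^sup>* = 1\<close> and \<open>Q\<close> of the
  opposite parity. The polynomial \<open>1 - P P\<^sup>*\<close> is even and vanishes at \<open>\<plusminus>1\<close>, so it equals
  \<open>(1 - x\<^sup>2) H(x\<^sup>2)\<close>; the hypotheses on \<open>P\<close> make \<open>H\<close> (for even \<open>d\<close>: \<open>H(w)/w\<close>) nonnegative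
  on the real line, hence of the form \<open>q q\<^sup>*\<close> by the fundamental theorem of algebra, and
  \<open>Q(x) = x\<^sup>e q(x\<^sup>2)\<close>.

  The unitary with first row \<open>(P, \<surd>(1 - x\<^sup>2) Q)\<close> is then peeled one factor
  \<open>exp(i \<phi> \<sigma>\<^sub>z) R(x)\<close> at a time: the phase is chosen so that the leading coefficients
  cancel, which lowers the degree while keeping the identity and the parities. At degree 0
  only a diagonal phase remains, and it is absorbed into \<open>\<phi>\<^sub>1\<close>. Evaluating the product at \<open>x = \<plusminus>1\<close> and \<open>x = 0\<close> gives the
  remaining claims.
\<close>

section \<open>Conjugate polynomials and parity\<close>

lemma poly_conj_poly: "poly (conj_poly P) z = cnj (poly P (cnj z))"
  unfolding conj_poly_def by (induction P) (auto simp: map_poly_pCons)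

lemma coeff_conj_poly: "coeff (conj_poly P) n = cnj (coeff P n)"
  unfolding conj_poly_def by (simp add: coeff_map_poly)

lemma degree_conj_poly: "degree (conj_poly P) = degree P"
  unfolding conj_poly_def by (rule degree_map_poly) auto

lemma conj_poly_eq_0_iff [simp]: "conj_poly P = 0 \<longleftrightarrow> P = 0"
  unfolding conj_poly_def by (simp add: map_poly_eq_0_iff)

lemma conj_poly_mult: "conj_poly (p * q) = conj_poly p * conj_poly q"
  by (rule poly_ext) (simp add: poly_conj_poly)

lemma conj_poly_eq_self:
  assumes "\<And>y::real. poly K (of_real y) \<in> \<real>"
  shows "conj_poly K = K"
proof -
  have "poly (K - conj_poly K) (of_real y) = 0" for y
    using assms[of y] by (auto simp: poly_conj_poly elim!: Reals_cases)
  then have "range complex_of_real \<subseteq> {z. poly (K - conj_poly K) z = 0}" by auto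
  moreover have "infinite (range complex_of_real)"
    by (metis finite_imageD inj_of_real infinite_UNIV_char_0)
  moreover have "K - conj_poly K = 0"
  proof (rule ccontr)
    assume "K - conj_poly K \<noteq> 0"
    then have "finite {z. poly (K - conj_poly K) z = 0}" by (rule poly_roots_finite)
    with calculation show False by (meson finite_subset)
  qed
  ultimately show ?thesis by simp
qed

lemma mult_cnj_eq_iff_cmod_eq: "a * cnj a = b * cnj b \<longleftrightarrow> cmod a = cmod b"
proof -
  have "a * cnj a = b * cnj b \<longleftrightarrow> (cmod a)\<^sup>2 = (cmod b)\<^sup>2"
    by (simp only: complex_norm_square[symmetric] of_real_eq_iff)
  also have "\<dots> \<longleftrightarrow> cmod a = cmod b" by (simp add: power2_eq_iff_nonneg)
  finally show ?thesis .
qed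

lemma coeff_eq_0_if_has_parity:
  assumes "has_parity P m" "odd (k + m)"
  shows "coeff P k = 0"
proof -
  have "pcompose P [:0,-1:] = smult ((-1)^m) P"
    using assms(1) by (intro poly_ext) (simp add: poly_pcompose has_parity_def)
  then have "(-1)^k * coeff P k = (-1)^m * coeff P k"
    by (metis coeff_pcompose_linear coeff_smult)
  moreover have "(-1::complex)^k = - ((-1)^m)"
    using assms(2) by (cases "even k") (auto simp: minus_one_power_iff)
  ultimately show ?thesis by (cases "even m") auto
qed

lemma has_parity_0_imp_poly_sq:
  assumes "has_parity G 0"
  shows "\<exists>H. \<forall>z. poly G z = poly H (z\<^sup>2)"
proof -
  have "\<exists>H. \<forall>z. poly G z = poly H (z\<^sup>2)" if "\<forall>k. odd k \<longrightarrow> coeff G k = 0" for G :: "complex poly"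
    using that
  proof (induction "degree G" arbitrary: G rule: less_induct)
    case less
    obtain a b G' where G: "G = pCons a (pCons b G')" by (metis pCons_cases)
    have b: "b = 0" using less.prems[rule_format, of 1] by (simp add: G)
    show ?case
    proof (cases "G' = 0")
      case True
      then show ?thesis by (intro exI[of _ "[:a:]"]) (simp add: G b)
    next
      case False
      have "\<forall>k. odd k \<longrightarrow> coeff G' k = 0"
      proof (intro allI impI)
        fix k :: nat assume "odd k"
        then show "coeff G' k = 0" using less.prems[rule_format, of "Suc (Suc k)"] by (simp add: G)
      qed
      moreover have "degree G' < degree G" using False by (simp add: G b)
      ultimately obtain H where "\<forall>z. poly G' z = poly H (z\<^sup>2)" using less.hyps by blast
      then show ?thesis
        by (intro exI[of _ "pCons a H"]) (simp add: G b power2_eq_square)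
    qed
  qed
  then show ?thesis using coeff_eq_0_if_has_parity[OF assms] by simp
qed

lemma coeff_quadratic_mult:
  "coeff ([:1,0,-1:] * R) (Suc (Suc k)) = coeff R (Suc (Suc k)) - coeff (R :: 'a::comm_ring_1 poly) k"
  by (simp add: mult_pCons_left coeff_pCons)

lemma coeff_mult_at_degree_bound:
  fixes p q :: "'a::idom poly"
  assumes "degree p \<le> m" "degree q \<le> k"
  shows "coeff (p * q) (m + k) = coeff p m * coeff q k"
proof (cases "degree p = m \<and> degree q = k")
  case True
  then show ?thesis using coeff_mult_degree_sum[of p q] by simp
next
  case False
  then have "coeff p m = 0 \<or> coeff q k = 0" using assms by (metis coeff_eq_0 le_neq_implies_less)
  moreover have "degree (p * q) < m + k"
    using False assms degree_mult_le[of p q] by (meson add_le_mono add_le_less_mono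
        add_less_le_mono le_neq_implies_less order.trans order_le_less_trans)
  ultimately show ?thesis by (auto simp: coeff_eq_0)
qed

section \<open>Polynomials nonnegative on the real line\<close>

lemma of_real_mult_nonneg_Reals_iff:
  fixes u :: complex
  assumes "0 < c"
  shows "of_real c * u \<in> \<real>\<^sub>\<ge>\<^sub>0 \<longleftrightarrow> u \<in> \<real>\<^sub>\<ge>\<^sub>0"
  using assms by (simp add: complex_nonneg_Reals_iff zero_le_mult_iff)

lemma poly_of_real_in_closed:
  fixes K :: "complex poly"
  assumes "closed S" "at r within A \<noteq> bot"
    and "eventually (\<lambda>y. poly K (of_real y) \<in> S) (at r within A)"
  shows "poly K (of_real r) \<in> S"
  by (rule Lim_in_closed_set[OF assms(1,3,2)]) (intro tendsto_intros)

lemma poly_of_real_nonneg_Reals_cofinite: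
  fixes K :: "complex poly"
  assumes "finite A" "\<And>y. y \<notin> A \<Longrightarrow> poly K (of_real y) \<in> \<real>\<^sub>\<ge>\<^sub>0"
  shows "poly K (of_real r) \<in> \<real>\<^sub>\<ge>\<^sub>0"
proof (rule poly_of_real_in_closed[where A = UNIV])
  have "eventually (\<lambda>y. \<forall>a\<in>A. y \<noteq> a) (at r)"
    using assms(1) by (intro eventually_ball_finite) (auto intro: eventually_neq_at_within)
  then show "eventually (\<lambda>y. poly K (of_real y) \<in> \<real>\<^sub>\<ge>\<^sub>0) (at r)"
    by eventually_elim (use assms(2) in blast)
qed simp_all

text \<open>A real zero of a polynomial that is nonnegative on the real line has even multiplicity,
  since the cofactor changes sign there; a non-real zero comes with its conjugate.\<close>

lemma nonneg_on_reals_conj_root: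
  fixes K L :: "complex poly"
  assumes nonneg: "\<And>y::real. poly K (of_real y) \<in> \<real>\<^sub>\<ge>\<^sub>0" and K: "K = [:-a, 1:] * L"
  shows "poly L (cnj a) = 0"
proof (cases "Im a = 0")
  case True
  define r where "r = Re a"
  have a: "a = of_real r" using True by (simp add: r_def complex_eq_iff)
  have K_r: "poly K (of_real y) = of_real (y - r) * poly L (of_real y)" for y
    by (simp add: K a algebra_simps)
  have "poly L (of_real y) \<in> \<real>\<^sub>\<ge>\<^sub>0" if "r < y" for y
    using nonneg[of y] that by (metis K_r diff_gt_0_iff_gt of_real_mult_nonneg_Reals_iff)
  then have "poly L (of_real r) \<in> \<real>\<^sub>\<ge>\<^sub>0"
    by (intro poly_of_real_in_closed[where A = "{r<..}"])
       (auto simp: eventually_at_right_field intro: exI[of _ "r + 1"])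
  moreover have "poly (-L) (of_real y) \<in> \<real>\<^sub>\<ge>\<^sub>0" if "y < r" for y
    using nonneg[of y] that of_real_mult_nonneg_Reals_iff[of "r - y" "poly (-L) (of_real y)"]
    by (simp add: K_r algebra_simps)
  then have "poly (-L) (of_real r) \<in> \<real>\<^sub>\<ge>\<^sub>0"
    by (intro poly_of_real_in_closed[where A = "{..<r}"])
       (auto simp: eventually_at_left_field intro: exI[of _ "r - 1"])
  ultimately show ?thesis
    by (simp add: a complex_nonneg_Reals_iff complex_nonpos_Reals_iff complex_eq_iff)
next
  case False
  have "conj_poly K = K"
    using nonneg by (intro conj_poly_eq_self) (meson nonneg_Reals_Real)
  then have "poly K (cnj a) = cnj (poly K a)"
    by (metis complex_cnj_cnj poly_conj_poly)
  also have "poly K a = 0" by (simp add: K)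
  finally have "(cnj a - a) * poly L (cnj a) = 0" by (auto simp: K)
  moreover have "cnj a \<noteq> a" using False by (simp add: complex_eq_iff)
  ultimately show ?thesis by simp
qed

lemma nonneg_on_reals_divide_root_pair:
  fixes K :: "complex poly"
  assumes nonneg: "\<And>y::real. poly K (of_real y) \<in> \<real>\<^sub>\<ge>\<^sub>0" and "poly K a = 0"
  shows "\<exists>M. K = [:-a, 1:] * [:- cnj a, 1:] * M \<and> (\<forall>y::real. poly M (of_real y) \<in> \<real>\<^sub>\<ge>\<^sub>0)"
proof -
  obtain L where L: "K = [:-a, 1:] * L" using assms(2) by (metis dvdE poly_eq_0_iff_dvd)
  obtain M where M: "L = [:- cnj a, 1:] * M"
    using nonneg_on_reals_conj_root[OF nonneg L] by (metis dvdE poly_eq_0_iff_dvd)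
  have K_M: "poly K (of_real y) = of_real ((cmod (of_real y - a))\<^sup>2) * poly M (of_real y)" for y
  proof -
    have "poly K (of_real y) = ((of_real y - a) * (of_real y - cnj a)) * poly M (of_real y)"
      by (simp add: L M algebra_simps)
    also have "(of_real y - a) * (of_real y - cnj a) = of_real ((cmod (of_real y - a))\<^sup>2)"
      using complex_norm_square[of "of_real y - a"] by simp
    finally show ?thesis .
  qed
  have M_nonneg_off: "poly M (of_real y) \<in> \<real>\<^sub>\<ge>\<^sub>0" if "y \<noteq> Re a" for y
  proof -
    have "of_real y - a \<noteq> 0" using that by (metis Re_complex_of_real eq_iff_diff_eq_0)
    then have "0 < (cmod (of_real y - a))\<^sup>2" by simp
    then show ?thesis
      using nonneg[of y] unfolding K_M by (simp only: of_real_mult_nonneg_Reals_iff)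
  qed
  have "poly M (of_real y) \<in> \<real>\<^sub>\<ge>\<^sub>0" for y
    using poly_of_real_nonneg_Reals_cofinite[of "{Re a}" M] M_nonneg_off by blast
  moreover have "K = [:-a, 1:] * [:- cnj a, 1:] * M" unfolding L M by (simp only: mult.assoc)
  ultimately show ?thesis by blast
qed

theorem nonneg_on_reals_imp_mult_conj:
  fixes K :: "complex poly"
  assumes "\<And>y::real. poly K (of_real y) \<in> \<real>\<^sub>\<ge>\<^sub>0"
  shows "\<exists>q. K = q * conj_poly q"
  using assms
proof (induction "degree K" arbitrary: K rule: less_induct)
  case less
  show ?case
  proof (cases "degree K = 0")
    case True
    then obtain c where K: "K = [:c:]" by (metis degree_eq_zeroE)
    obtain t where t: "c = of_real t" "0 \<le> t"
      using less.prems[of 0] by (auto simp: K elim: nonneg_Reals_cases)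
    have "[:of_real (sqrt t):] * conj_poly [:of_real (sqrt t):] = K"
      by (rule poly_ext) (simp add: poly_conj_poly K t flip: of_real_mult)
    then show ?thesis by metis
  next
    case False
    then have "\<not> constant (poly K)" by (simp add: constant_degree)
    then obtain a where "poly K a = 0" using fundamental_theorem_of_algebra by blast
    then obtain M where K: "K = [:-a, 1:] * [:- cnj a, 1:] * M"
      and M_nonneg: "\<forall>y::real. poly M (of_real y) \<in> \<real>\<^sub>\<ge>\<^sub>0"
      using nonneg_on_reals_divide_root_pair[OF less.prems] by blast
    have "K \<noteq> 0" using False by auto
    then have "degree M < degree K"
      by (simp add: K degree_mult_eq del: mult_pCons_left)
    then obtain q where "M = q * conj_poly q" using less.hyps M_nonneg by blast
    moreover have "conj_poly [:-a, 1:] = [:- cnj a, 1:]"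
      by (rule poly_ext) (simp add: poly_conj_poly)
    ultimately have "K = ([:-a, 1:] * q) * conj_poly ([:-a, 1:] * q)"
      unfolding K conj_poly_mult by (simp only: ac_simps)
    then show ?thesis by blast
  qed
qed

lemma exists_parity_factor:
  fixes H :: "complex poly"
  assumes "monom 1 e dvd H" "finite A"
    and "\<And>w::real. w \<notin> A \<Longrightarrow> poly (monom 1 e * H) (of_real w) \<in> \<real>\<^sub>\<ge>\<^sub>0"
  shows "\<exists>Q. has_parity Q e \<and> (\<forall>z. poly (Q * conj_poly Q) z = poly H (z\<^sup>2))"
proof -
  obtain K where H: "H = monom 1 e * K" using assms(1) by (rule dvdE)
  have K_nonneg_off: "poly K (of_real w) \<in> \<real>\<^sub>\<ge>\<^sub>0" if "w \<notin> A \<union> {0}" for w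
  proof -
    have eq: "poly (monom 1 e * H) (of_real w) = of_real (w ^ (2 * e)) * poly K (of_real w)"
      by (simp add: H poly_monom power_mult_distrib power_add mult_2 flip: mult.assoc)
    have pos: "0 < w ^ (2 * e)" using that by (simp add: power_mult)
    have "w \<notin> A" using that by simp
    then have "poly (monom 1 e * H) (of_real w) \<in> \<real>\<^sub>\<ge>\<^sub>0" by (rule assms(3))
    then show ?thesis unfolding eq of_real_mult_nonneg_Reals_iff[OF pos] .
  qed
  have "poly K (of_real w) \<in> \<real>\<^sub>\<ge>\<^sub>0" for w
    using poly_of_real_nonneg_Reals_cofinite[of "A \<union> {0}" K, OF _ K_nonneg_off] assms(2) by simp
  then obtain k where k: "K = k * conj_poly k" using nonneg_on_reals_imp_mult_conj by blast
  define Q where "Q = monom 1 e * pcompose k (monom 1 2)"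
  have Q: "poly Q z = z ^ e * poly k (z\<^sup>2)" for z
    by (simp add: Q_def poly_monom poly_pcompose)
  have "poly Q (- z) = (-1)^e * poly Q z" for z
    using power_minus[of z e] by (simp add: Q)
  then have "has_parity Q e" by (simp add: has_parity_def)
  moreover have "poly (Q * conj_poly Q) z = poly H (z\<^sup>2)" for z
  proof -
    have "poly (Q * conj_poly Q) z = (z\<^sup>2) ^ e * (poly k (z\<^sup>2) * cnj (poly k (cnj (z\<^sup>2))))"
      by (simp add: Q poly_conj_poly power_mult_distrib power2_eq_square)
    also have "\<dots> = poly H (z\<^sup>2)" by (simp add: H k poly_conj_poly poly_monom)
    finally show ?thesis .
  qed
  ultimately show ?thesis by blast
qed

section \<open>The complementary polynomial\<close>

lemma one_minus_mult_conj_poly_factor: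
  fixes P :: "complex poly"
  assumes "has_parity P d" "cmod (poly P 1) = 1"
  shows "\<exists>H. \<forall>z. poly (1 - P * conj_poly P) z = (1 - z\<^sup>2) * poly H (z\<^sup>2)"
proof -
  have sign: "(-1::complex)^d * (-1)^d = 1" by (simp flip: power_add)
  have "has_parity (1 - P * conj_poly P) 0"
    using assms(1) sign by (simp add: has_parity_def poly_conj_poly algebra_simps)
  then obtain F where F: "\<And>z. poly (1 - P * conj_poly P) z = poly F (z\<^sup>2)"
    using has_parity_0_imp_poly_sq by blast
  have "poly F 1 = 1 - poly P 1 * cnj (poly P 1)"
    using F[of 1] by (simp add: poly_conj_poly)
  also have "\<dots> = 0" using assms(2) by (simp flip: complex_norm_square)
  finally obtain G where G: "F = [:-1, 1:] * G" by (metis dvdE poly_eq_0_iff_dvd)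
  have FG: "poly F w = (w - 1) * poly G w" for w unfolding G by (simp add: algebra_simps)
  have "poly (1 - P * conj_poly P) z = (1 - z\<^sup>2) * poly (-G) (z\<^sup>2)" for z
    unfolding F FG by (simp add: algebra_simps)
  then show ?thesis by blast
qed

lemma poly_nonneg_Reals_pos_axis:
  fixes P H :: "complex poly"
  assumes FH: "\<And>z. poly (1 - P * conj_poly P) z = (1 - z\<^sup>2) * poly H (z\<^sup>2)"
    and le: "\<forall>x::real. -1 \<le> x \<and> x \<le> 1 \<longrightarrow> norm (poly P (of_real x)) \<le> 1"
    and ge: "\<forall>x::real. (x \<le> -1 \<or> 1 \<le> x) \<longrightarrow> norm (poly P (of_real x)) \<ge> 1"
    and w: "0 < w" "w \<noteq> 1"
  shows "poly (monom 1 e * H) (of_real w) \<in> \<real>\<^sub>\<ge>\<^sub>0"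
proof -
  define s where "s = sqrt w"
  have s: "0 \<le> s" "s\<^sup>2 = w" using w by (simp_all add: s_def)
  define n where "n = (cmod (poly P (of_real s)))\<^sup>2"
  have eq: "of_real (1 - w) * poly H (of_real w) = of_real (1 - n)"
    using FH[of "of_real s"] s(2)
    by (simp add: n_def poly_conj_poly flip: complex_norm_square of_real_power)
  have "poly H (of_real w) \<in> \<real>\<^sub>\<ge>\<^sub>0"
  proof (cases "w < 1")
    case True
    then have "s \<le> 1" by (simp add: s_def)
    then have "cmod (poly P (of_real s)) \<le> 1" using le s(1) by auto
    then have "n \<le> 1" unfolding n_def by (simp add: power_le_one)
    then have "of_real (1 - w) * poly H (of_real w) \<in> \<real>\<^sub>\<ge>\<^sub>0"
      unfolding eq nonneg_Reals_of_real_iff by simp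
    moreover have "0 < 1 - w" using True by simp
    ultimately show ?thesis by (simp only: of_real_mult_nonneg_Reals_iff)
  next
    case False
    then have "1 \<le> n" using ge s w by (simp add: n_def s_def one_le_power)
    moreover have eq': "of_real (w - 1) * poly H (of_real w) = of_real (n - 1)"
      using arg_cong[OF eq, of uminus] by (simp add: algebra_simps)
    ultimately have "of_real (w - 1) * poly H (of_real w) \<in> \<real>\<^sub>\<ge>\<^sub>0"
      unfolding eq' nonneg_Reals_of_real_iff by simp
    moreover have "0 < w - 1" using False w(2) by simp
    ultimately show ?thesis by (simp only: of_real_mult_nonneg_Reals_iff)
  qed
  then show ?thesis
    using w(1) by (simp add: poly_monom)
qed

lemma poly_nonneg_Reals_neg_axis:
  fixes P H :: "complex poly"
  assumes FH: "\<And>z. poly (1 - P * conj_poly P) z = (1 - z\<^sup>2) * poly H (z\<^sup>2)"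
    and parity: "has_parity P d"
    and imag: "even d \<longrightarrow> (\<forall>x::real.
           poly P (\<i> * of_real x) * poly (conj_poly P) (\<i> * of_real x) \<in> \<real> \<and>
           Re (poly P (\<i> * of_real x) * poly (conj_poly P) (\<i> * of_real x)) \<ge> 1)"
    and w: "w < 0"
  shows "poly (monom 1 (Suc d mod 2) * H) (of_real w) \<in> \<real>\<^sub>\<ge>\<^sub>0"
proof -
  define z where "z = \<i> * of_real (sqrt (- w))"
  define c where "c = poly P z * poly (conj_poly P) z"
  have "z\<^sup>2 = of_real w"
    using w by (simp add: z_def power_mult_distrib flip: of_real_power)
  then have eq: "of_real (1 - w) * poly H (of_real w) = 1 - c"
    using FH[of z] by (simp add: c_def)
  have pos: "0 < 1 - w" using w by simp
  show ?thesis
  proof (cases "even d")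
    case True
    then have "c \<in> \<real>" "1 \<le> Re c" using imag by (simp_all add: c_def z_def)
    then obtain r where r: "c = of_real r" "1 \<le> r" by (auto elim: Reals_cases)
    have "of_real (1 - w) * (of_real w * poly H (of_real w)) = of_real (w * (1 - r))"
      using arg_cong[OF eq, of "\<lambda>t. of_real w * t"] by (simp add: r algebra_simps)
    moreover have "0 \<le> w * (1 - r)" using w r(2) by (simp add: mult_nonpos_nonpos)
    ultimately have "of_real (1 - w) * (of_real w * poly H (of_real w)) \<in> \<real>\<^sub>\<ge>\<^sub>0"
      by (simp only: nonneg_Reals_of_real_iff)
    moreover have "Suc d mod 2 = 1" using True by presburger
    ultimately show ?thesis unfolding of_real_mult_nonneg_Reals_iff[OF pos] by (simp add: poly_monom)
  next
    case False
    have "cnj z = - z" by (simp add: z_def)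
    then have "c = - (poly P z * cnj (poly P z))"
      using parity False by (simp add: c_def has_parity_def poly_conj_poly)
    also have "poly P z * cnj (poly P z) = of_real ((cmod (poly P z))\<^sup>2)"
      by (rule complex_norm_square[symmetric])
    finally have "c = - of_real ((cmod (poly P z))\<^sup>2)" .
    then have "of_real (1 - w) * poly H (of_real w) = of_real (1 + (cmod (poly P z))\<^sup>2)"
      unfolding eq by simp
    then have "of_real (1 - w) * poly H (of_real w) \<in> \<real>\<^sub>\<ge>\<^sub>0"
      by (simp only: nonneg_Reals_of_real_iff) simp
    moreover have "Suc d mod 2 = 0" using False by presburger
    ultimately show ?thesis unfolding of_real_mult_nonneg_Reals_iff[OF pos] by (simp add: poly_monom)
  qed
qed

text \<open>For even \<open>d\<close> the hypotheses at \<open>x = 0\<close> force \<open>|P(0)| = 1\<close>, so \<open>H(0) = 0\<close>.\<close>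
lemma monom_Suc_mod_2_dvd:
  fixes P H :: "complex poly"
  assumes FH: "\<And>z. poly (1 - P * conj_poly P) z = (1 - z\<^sup>2) * poly H (z\<^sup>2)"
    and le: "\<forall>x::real. -1 \<le> x \<and> x \<le> 1 \<longrightarrow> norm (poly P (of_real x)) \<le> 1"
    and imag: "even d \<longrightarrow> (\<forall>x::real.
           poly P (\<i> * of_real x) * poly (conj_poly P) (\<i> * of_real x) \<in> \<real> \<and>
           Re (poly P (\<i> * of_real x) * poly (conj_poly P) (\<i> * of_real x)) \<ge> 1)"
  shows "monom 1 (Suc d mod 2) dvd H"
proof (cases "even d")
  case True
  have "1 \<le> Re (poly P 0 * poly (conj_poly P) 0)"
    using imag True by (metis mult_zero_right of_real_0)
  then have "1 \<le> (cmod (poly P 0))\<^sup>2" by (simp add: poly_conj_poly flip: complex_norm_square)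
  moreover have "cmod (poly P 0) \<le> 1" using le[rule_format, of 0] by simp
  then have "(cmod (poly P 0))\<^sup>2 \<le> 1" by (simp add: power_le_one)
  ultimately have "(cmod (poly P 0))\<^sup>2 = 1" by linarith
  then have "poly H 0 = 0"
    using FH[of 0] by (simp add: poly_conj_poly flip: complex_norm_square)
  moreover have "Suc d mod 2 = 1" using True by presburger
  ultimately show ?thesis by (simp add: monom_1_dvd_iff' poly_0_coeff_0)
next
  case False
  then have "Suc d mod 2 = 0" by presburger
  then show ?thesis by simp
qed

theorem complementary_poly_exists:
  fixes P :: "complex poly"
  assumes parity: "has_parity P d"
    and le: "\<forall>x::real. -1 \<le> x \<and> x \<le> 1 \<longrightarrow> norm (poly P (of_real x)) \<le> 1"
    and ge: "\<forall>x::real. (x \<le> -1 \<or> 1 \<le> x) \<longrightarrow> norm (poly P (of_real x)) \<ge> 1"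
    and imag: "even d \<longrightarrow> (\<forall>x::real.
           poly P (\<i> * of_real x) * poly (conj_poly P) (\<i> * of_real x) \<in> \<real> \<and>
           Re (poly P (\<i> * of_real x) * poly (conj_poly P) (\<i> * of_real x)) \<ge> 1)"
  shows "\<exists>Q. has_parity Q (Suc d) \<and> P * conj_poly P + [:1,0,-1:] * (Q * conj_poly Q) = 1"
proof -
  have "cmod (poly P 1) \<le> 1" "1 \<le> cmod (poly P 1)"
    using le[rule_format, of 1] ge[rule_format, of 1] by simp_all
  then have "cmod (poly P 1) = 1" by linarith
  then obtain H where FH: "\<And>z. poly (1 - P * conj_poly P) z = (1 - z\<^sup>2) * poly H (z\<^sup>2)"
    using one_minus_mult_conj_poly_factor[OF parity] by blast
  have "poly (monom 1 (Suc d mod 2) * H) (of_real w) \<in> \<real>\<^sub>\<ge>\<^sub>0" if "w \<notin> {0, 1}" for w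
  proof (cases "w < 0")
    case True
    then show ?thesis by (rule poly_nonneg_Reals_neg_axis[OF FH parity imag])
  next
    case False
    then have "0 < w" "w \<noteq> 1" using that by auto
    then show ?thesis by (rule poly_nonneg_Reals_pos_axis[OF FH le ge])
  qed
  then obtain Q where Q: "has_parity Q (Suc d mod 2)" "\<And>z. poly (Q * conj_poly Q) z = poly H (z\<^sup>2)"
    using exists_parity_factor[OF monom_Suc_mod_2_dvd[OF FH le imag], of "{0, 1}"] by auto
  have "has_parity Q (Suc d)"
    using Q(1) by (simp add: has_parity_def minus_one_power_iff)
  moreover have "P * conj_poly P + [:1,0,-1:] * (Q * conj_poly Q) = 1"
  proof (rule poly_ext)
    fix z :: complex
    have "poly ([:1,0,-1:] * (Q * conj_poly Q)) z = poly [:1,0,-1:] z * poly (Q * conj_poly Q) z"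
      by (rule poly_mult)
    also have "\<dots> = poly (1 - P * conj_poly P) z"
      unfolding FH Q(2) by (simp add: power2_eq_square)
    finally show "poly (P * conj_poly P + [:1,0,-1:] * (Q * conj_poly Q)) z = poly 1 z"
      by (simp only: poly_add) simp
  qed
  ultimately show ?thesis by blast
qed

lemma coeff_complementary_eq_0:
  fixes P Q :: "complex poly"
  assumes "P * conj_poly P + [:1,0,-1:] * (Q * conj_poly Q) = 1" "degree P \<le> d" "d \<le> i"
  shows "coeff Q i = 0"
proof (cases "Q = 0")
  case False
  have "2 + 2 * degree Q = degree ([:1,0,-1:] * (Q * conj_poly Q))"
    using False by (simp add: degree_mult_eq degree_conj_poly del: mult_pCons_left)
  also have "[:1,0,-1:] * (Q * conj_poly Q) = 1 - P * conj_poly P"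
    using assms(1) by (simp add: algebra_simps)
  also have "degree (1 - P * conj_poly P) \<le> 2 * d"
    using degree_diff_le_max[of 1 "P * conj_poly P"] degree_mult_le[of P "conj_poly P"] assms(2)
    by (simp add: degree_conj_poly)
  finally show ?thesis using assms(3) by (simp add: coeff_eq_0)
qed simp

lemma cmod_coeff_complementary_eq:
  fixes P Q :: "complex poly"
  assumes "P * conj_poly P + [:1,0,-1:] * (Q * conj_poly Q) = 1" "degree P \<le> Suc n"
  shows "cmod (coeff P (Suc n)) = cmod (coeff Q n)"
proof -
  have "degree Q \<le> n"
    using coeff_complementary_eq_0[OF assms] by (intro degree_le) auto
  then have QQ: "coeff (Q * conj_poly Q) (n + n) = coeff Q n * cnj (coeff Q n)"
    and QQ_high: "coeff (Q * conj_poly Q) (Suc (Suc (n + n))) = 0"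
    using coeff_mult_at_degree_bound[of Q n "conj_poly Q" n] degree_mult_le[of Q "conj_poly Q"]
    by (simp_all add: degree_conj_poly coeff_conj_poly coeff_eq_0)
  have PP: "coeff (P * conj_poly P) (Suc (Suc (n + n))) = coeff P (Suc n) * cnj (coeff P (Suc n))"
    using coeff_mult_at_degree_bound[of P "Suc n" "conj_poly P" "Suc n"] assms(2)
    by (simp add: degree_conj_poly coeff_conj_poly)
  have "0 = coeff (P * conj_poly P + [:1,0,-1:] * (Q * conj_poly Q)) (Suc (Suc (n + n)))"
    unfolding assms(1) by simp
  also have "\<dots> = coeff P (Suc n) * cnj (coeff P (Suc n)) - coeff Q n * cnj (coeff Q n)"
    unfolding coeff_add coeff_quadratic_mult PP QQ QQ_high by simp
  finally show ?thesis by (simp flip: mult_cnj_eq_iff_cmod_eq)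
qed

section \<open>Peeling off one QSP factor\<close>

text \<open>The general shape of \<open>(\<Prod>\<^sub>j exp(i \<phi>\<^sub>j \<sigma>\<^sub>z) R(x)) exp(i \<gamma> \<sigma>\<^sub>z)\<close> with \<open>d\<close> factors, where
  \<open>p = P(x)\<close> and \<open>q = Q(x)\<close>.\<close>

definition qsp_unitary :: "nat \<Rightarrow> complex \<Rightarrow> complex \<Rightarrow> real \<Rightarrow> complex^2^2" where
  "qsp_unitary d p q x = (\<chi> a b.
     if a = 1 then (if b = 1 then p else of_real (sqrt (1 - x\<^sup>2)) * q)
     else (if b = 1 then - ((-1)^d) * of_real (sqrt (1 - x\<^sup>2)) * cnj q else (-1)^d * cnj p))"

lemma qsp_unitary_nth:
  "qsp_unitary d p q x $ 1 $ 1 = p"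
  "qsp_unitary d p q x $ 1 $ 2 = of_real (sqrt (1 - x\<^sup>2)) * q"
  "qsp_unitary d p q x $ 2 $ 1 = - ((-1)^d) * of_real (sqrt (1 - x\<^sup>2)) * cnj q"
  "qsp_unitary d p q x $ 2 $ 2 = (-1)^d * cnj p"
  by (simp_all add: qsp_unitary_def)

lemma matrix_mult_2_nth: "((A::'a::comm_ring_1^2^2) ** B) $ i $ j = A$i$1 * B$1$j + A$i$2 * B$2$j"
  by (simp add: matrix_matrix_mult_def sum_2)

lemma cnj_exp_i: "cnj (exp (\<i> * of_real \<phi>)) = exp (- \<i> * of_real \<phi>)"
  by (simp add: exp_cnj)

lemma qsp_unitary_step:
  fixes \<phi> x :: real
  assumes "-1 \<le> x" "x \<le> 1"
  defines "u \<equiv> exp (\<i> * of_real \<phi>)"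
  shows "(expSigmaZ \<phi> ** Rmat x) **
           qsp_unitary d (cnj u * x * p - (-1)^(Suc d) * u * (1 - x\<^sup>2) * cnj q)
                         (cnj u * x * q + (-1)^(Suc d) * u * cnj p) x
         = qsp_unitary (Suc d) p q x"
proof -
  define s where "s = sqrt (1 - x\<^sup>2)"
  have "x\<^sup>2 \<le> 1" using assms(1,2) by (simp add: abs_square_le_1)
  then have s: "of_real s * of_real s = 1 - (complex_of_real x)\<^sup>2"
    unfolding s_def by (simp flip: of_real_mult)
  have u: "u * cnj u = 1" by (simp add: u_def cnj_exp_i flip: exp_add)
  define \<delta> where "\<delta> = (-1::complex)^d"
  have sign: "\<delta> * \<delta> = 1" by (simp add: \<delta>_def flip: power_add)
  have cnj_sign: "cnj \<delta> = \<delta>" by (simp add: \<delta>_def)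
  have e: "expSigmaZ \<phi> $ 1 $ 1 = u" "expSigmaZ \<phi> $ 1 $ 2 = 0"
    "expSigmaZ \<phi> $ 2 $ 1 = 0" "expSigmaZ \<phi> $ 2 $ 2 = cnj u"
    by (simp_all add: expSigmaZ_def u_def cnj_exp_i)
  have r: "Rmat x $ 1 $ 1 = x" "Rmat x $ 1 $ 2 = s" "Rmat x $ 2 $ 1 = s" "Rmat x $ 2 $ 2 = - x"
    by (simp_all add: Rmat_def s_def)
  show ?thesis
    unfolding vec_eq_iff forall_2 matrix_mult_2_nth qsp_unitary_nth e r s_def[symmetric]
      power_Suc \<delta>_def[symmetric]
    by (simp add: cnj_sign, intro conjI) (use s u sign in algebra)+
qed

text \<open>The polynomials in the first row of \<open>(exp(i \<phi> \<sigma>\<^sub>z) R(x))\<^sup>-\<^sup>1 U\<close>, where \<open>U\<close> has first row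
  \<open>(P(x), \<surd>(1 - x\<^sup>2) Q(x))\<close>, \<open>u = exp(i \<phi>)\<close> and \<open>m\<close> is the degree bound of \<open>P\<close>.\<close>

definition qsp_peel_P :: "complex \<Rightarrow> nat \<Rightarrow> complex poly \<Rightarrow> complex poly \<Rightarrow> complex poly" where
  "qsp_peel_P u m P Q = smult (cnj u) (pCons 0 P) - smult ((-1)^m * u) ([:1,0,-1:] * conj_poly Q)"

definition qsp_peel_Q :: "complex \<Rightarrow> nat \<Rightarrow> complex poly \<Rightarrow> complex poly \<Rightarrow> complex poly" where
  "qsp_peel_Q u m P Q = smult (cnj u) (pCons 0 Q) + smult ((-1)^m * u) (conj_poly P)"

lemma poly_qsp_peel_P:
  "poly (qsp_peel_P u m P Q) z = cnj u * z * poly P z - (-1)^m * u * (1 - z\<^sup>2) * cnj (poly Q (cnj z))"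
  by (simp add: qsp_peel_P_def poly_conj_poly power2_eq_square algebra_simps)

lemma poly_qsp_peel_Q:
  "poly (qsp_peel_Q u m P Q) z = cnj u * z * poly Q z + (-1)^m * u * cnj (poly P (cnj z))"
  by (simp add: qsp_peel_Q_def poly_conj_poly)

lemma has_parity_qsp_peel:
  assumes "has_parity P (Suc n)" "has_parity Q (Suc (Suc n))"
  shows "has_parity (qsp_peel_P u (Suc n) P Q) n" "has_parity (qsp_peel_Q u (Suc n) P Q) (Suc n)"
  using assms by (simp_all add: has_parity_def poly_qsp_peel_P poly_qsp_peel_Q algebra_simps)

lemma qsp_peel_complementary:
  fixes P Q :: "complex poly"
  assumes "P * conj_poly P + [:1,0,-1:] * (Q * conj_poly Q) = 1" "u * cnj u = 1"
  shows "qsp_peel_P u m P Q * conj_poly (qsp_peel_P u m P Q)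
           + [:1,0,-1:] * (qsp_peel_Q u m P Q * conj_poly (qsp_peel_Q u m P Q)) = 1"
proof (rule poly_ext)
  fix z :: complex
  define \<delta> where "\<delta> = (-1::complex)^m"
  have sign: "\<delta> * \<delta> = 1" "cnj \<delta> = \<delta>" by (simp_all add: \<delta>_def flip: power_add)
  have "poly P z * cnj (poly P (cnj z)) + (1 - z\<^sup>2) * (poly Q z * cnj (poly Q (cnj z))) = 1"
    using arg_cong[OF assms(1), of "\<lambda>p. poly p z"]
    by (simp add: poly_conj_poly power2_eq_square algebra_simps)
  then show "poly (qsp_peel_P u m P Q * conj_poly (qsp_peel_P u m P Q)
      + [:1,0,-1:] * (qsp_peel_Q u m P Q * conj_poly (qsp_peel_Q u m P Q))) z = poly 1 z"
    unfolding poly_add poly_mult poly_conj_poly poly_qsp_peel_P poly_qsp_peel_Q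
      \<delta>_def[symmetric]
    using assms(2) sign by (simp add: power2_eq_square) algebra
qed

lemma exp_i_Arg:
  assumes "cmod c = 1"
  shows "exp (\<i> * of_real (Arg c)) = c"
proof -
  have "cis (Arg c) = sgn c" using assms by (intro cis_Arg) auto
  also have "sgn c = c" using assms by (simp add: sgn_div_norm)
  finally show ?thesis by (simp add: cis_conv_exp mult.commute)
qed

lemma exists_phase_cancel:
  fixes a b \<delta> :: complex
  assumes "cmod a = cmod b" "cmod \<delta> = 1"
  shows "\<exists>\<phi>::real. cnj (exp (\<i> * of_real \<phi>)) * a + \<delta> * exp (\<i> * of_real \<phi>) * cnj b = 0"
proof (cases "b = 0")
  case False
  define w where "w = - a / (\<delta> * cnj b)"
  have "cmod w = 1" using assms False by (simp add: w_def norm_mult norm_divide)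
  define u where "u = exp (\<i> * of_real (Arg w / 2))"
  have "u * u = w"
    using exp_i_Arg[OF \<open>cmod w = 1\<close>] by (simp add: u_def flip: exp_add)
  have "cnj u * u = 1" unfolding u_def cnj_exp_i by (simp flip: exp_add)
  have "cnj u * (a + \<delta> * w * cnj b) = cnj u * a + \<delta> * (cnj u * u) * u * cnj b"
    unfolding \<open>u * u = w\<close>[symmetric] by (simp add: algebra_simps)
  then have "cnj u * a + \<delta> * u * cnj b = cnj u * (a + \<delta> * w * cnj b)"
    using \<open>cnj u * u = 1\<close> by simp
  also have "a + \<delta> * w * cnj b = 0" using False assms(2) by (auto simp: w_def)
  finally have "cnj u * a + \<delta> * u * cnj b = 0" by simp
  then show ?thesis unfolding u_def by blast
qed (use assms(1) in simp)

lemma exists_phase_degree_qsp_peel_le: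
  fixes P Q :: "complex poly"
  assumes "P * conj_poly P + [:1,0,-1:] * (Q * conj_poly Q) = 1"
    and "degree P \<le> Suc n" "has_parity P (Suc n)" "has_parity Q (Suc (Suc n))"
  shows "\<exists>\<phi>. degree (qsp_peel_P (exp (\<i> * of_real \<phi>)) (Suc n) P Q) \<le> n"
proof -
  have Q_high: "coeff Q i = 0" if "Suc n \<le> i" for i
    using coeff_complementary_eq_0[OF assms(1,2) that] .
  obtain \<phi> where \<phi>: "cnj (exp (\<i> * of_real \<phi>)) * coeff P (Suc n)
      + (-1)^Suc n * exp (\<i> * of_real \<phi>) * cnj (coeff Q n) = 0"
    using exists_phase_cancel[OF cmod_coeff_complementary_eq[OF assms(1,2)], of "(-1)^Suc n"]
    by (auto simp: norm_power)
  define P' where "P' = qsp_peel_P (exp (\<i> * of_real \<phi>)) (Suc n) P Q"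
  have "coeff P' i = 0" if "n < i" for i
  proof -
    consider "i = Suc n" | "i = Suc (Suc n)" | "Suc (Suc n) < i" using \<open>n < i\<close> by linarith
    then show ?thesis
    proof cases
      case 1
      then show ?thesis
        using coeff_eq_0_if_has_parity[OF has_parity_qsp_peel(1)[OF assms(3,4)], of i]
        by (simp add: P'_def)
    next
      case 2
      then show ?thesis using \<phi> Q_high[of "Suc (Suc n)"]
        by (simp add: P'_def qsp_peel_P_def coeff_quadratic_mult coeff_conj_poly)
    next
      case 3
      define j where "j = i - 2"
      have j: "i = Suc (Suc j)" "Suc n \<le> j" using 3 by (simp_all add: j_def)
      then show ?thesis using assms(2) Q_high[of j] Q_high[of i]
        by (simp add: P'_def qsp_peel_P_def coeff_quadratic_mult coeff_conj_poly coeff_eq_0)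
    qed
  qed
  then show ?thesis unfolding P'_def by (blast intro: degree_le)
qed

section \<open>The phase factorization\<close>

lemma expSigmaZ_eq_qsp_unitary_0:
  fixes P :: "complex poly"
  assumes "degree P = 0" "P * conj_poly P = 1"
  shows "\<exists>\<gamma>. \<forall>x. expSigmaZ \<gamma> = qsp_unitary 0 (poly P x) 0 x"
proof -
  obtain c where P: "P = [:c:]" using assms(1) by (metis degree_eq_zeroE)
  have "c * cnj c = 1"
    using arg_cong[OF assms(2), of "\<lambda>p. coeff p 0"] by (simp add: P coeff_conj_poly)
  then have "cmod c = 1" using mult_cnj_eq_iff_cmod_eq[of c 1] by simp
  then have "exp (\<i> * of_real (Arg c)) = c" "exp (- \<i> * of_real (Arg c)) = cnj c"
    using exp_i_Arg cnj_exp_i by metis+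
  then show ?thesis
    by (intro exI[of _ "Arg c"]) (simp add: vec_eq_iff forall_2 expSigmaZ_def qsp_unitary_def P)
qed

lemma qsp_factorization:
  fixes P Q :: "complex poly"
  assumes "P * conj_poly P + [:1,0,-1:] * (Q * conj_poly Q) = 1"
    and "degree P \<le> d" "has_parity P d" "has_parity Q (Suc d)"
  shows "\<exists>\<Phi> \<gamma>. length \<Phi> = d \<and> (\<forall>x. -1 \<le> x \<and> x \<le> 1 \<longrightarrow>
           qspProd \<Phi> x ** expSigmaZ \<gamma> = qsp_unitary d (poly P x) (poly Q x) x)"
  using assms
proof (induction d arbitrary: P Q)
  case 0
  have "Q = 0" using coeff_complementary_eq_0[OF 0(1,2)] by (intro poly_eqI) simp
  then have "P * conj_poly P = 1" using 0(1) by simp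
  then obtain \<gamma> where "\<forall>x. expSigmaZ \<gamma> = qsp_unitary 0 (poly P x) 0 x"
    using expSigmaZ_eq_qsp_unitary_0 0(2) by auto
  then show ?case using \<open>Q = 0\<close> by (intro exI[of _ "[]"] exI[of _ \<gamma>]) (simp add: qspProd_def)
next
  case (Suc n)
  obtain \<phi> where deg: "degree (qsp_peel_P (exp (\<i> * of_real \<phi>)) (Suc n) P Q) \<le> n"
    using exists_phase_degree_qsp_peel_le[OF Suc.prems] by blast
  define u where "u = exp (\<i> * of_real \<phi>)"
  have "u * cnj u = 1" unfolding u_def cnj_exp_i by (simp flip: exp_add)
  obtain \<Phi> \<gamma> where \<Phi>: "length \<Phi> = n"
    and \<Phi>_eq: "\<And>x. -1 \<le> x \<Longrightarrow> x \<le> 1 \<Longrightarrow> qspProd \<Phi> x ** expSigmaZ \<gamma> =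
       qsp_unitary n (poly (qsp_peel_P u (Suc n) P Q) x) (poly (qsp_peel_Q u (Suc n) P Q) x) x"
    using Suc.IH[OF qsp_peel_complementary[OF Suc.prems(1) \<open>u * cnj u = 1\<close>] deg[folded u_def]
        has_parity_qsp_peel[OF Suc.prems(3,4)]] by blast
  show ?case
  proof (intro exI[of _ "\<phi> # \<Phi>"] exI[of _ \<gamma>] conjI allI impI)
    fix x :: real assume x: "-1 \<le> x \<and> x \<le> 1"
    have "qspProd (\<phi> # \<Phi>) x ** expSigmaZ \<gamma> = (expSigmaZ \<phi> ** Rmat x) ** (qspProd \<Phi> x ** expSigmaZ \<gamma>)"
      by (simp add: qspProd_def matrix_mul_assoc)
    also have "\<dots> = qsp_unitary (Suc n) (poly P x) (poly Q x) x"
      unfolding \<Phi>_eq[OF conjunct1[OF x] conjunct2[OF x]] poly_qsp_peel_P poly_qsp_peel_Q u_def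
      using qsp_unitary_step[of x \<phi> n] x by simp
    finally show "qspProd (\<phi> # \<Phi>) x ** expSigmaZ \<gamma> = qsp_unitary (Suc n) (poly P x) (poly Q x) x" .
  qed (simp add: \<Phi>)
qed

lemma expSigmaZ_add: "expSigmaZ (a + b) = expSigmaZ b ** expSigmaZ a"
  by (simp add: vec_eq_iff forall_2 matrix_mult_2_nth expSigmaZ_def algebra_simps flip: exp_add)

lemma qspProd_absorb_phase:
  assumes "\<Phi> \<noteq> []"
  shows "\<exists>\<Psi>. length \<Psi> = length \<Phi> \<and> (\<forall>x. qspProd \<Psi> x $ 1 $ 1 = (qspProd \<Phi> x ** expSigmaZ \<gamma>) $ 1 $ 1)"
proof -
  obtain \<phi> \<Phi>' where \<Phi>: "\<Phi> = \<phi> # \<Phi>'" using assms by (cases \<Phi>) auto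
  have "qspProd ((\<phi> + \<gamma>) # \<Phi>') x = expSigmaZ \<gamma> ** qspProd \<Phi> x" for x
    by (simp add: \<Phi> qspProd_def expSigmaZ_add matrix_mul_assoc)
  then have "qspProd ((\<phi> + \<gamma>) # \<Phi>') x $ 1 $ 1 = (qspProd \<Phi> x ** expSigmaZ \<gamma>) $ 1 $ 1" for x
    by (simp add: matrix_mult_2_nth expSigmaZ_def mult.commute)
  then show ?thesis by (intro exI[of _ "(\<phi> + \<gamma>) # \<Phi>'"]) (simp add: \<Phi>)
qed

theorem qsp_exists:
  fixes P Q :: "complex poly"
  assumes "P * conj_poly P + [:1,0,-1:] * (Q * conj_poly Q) = 1"
    and "degree P \<le> d" "1 \<le> d" "has_parity P d" "has_parity Q (Suc d)"
  shows "\<exists>\<Phi>. length \<Phi> = d \<and> (\<forall>x. -1 \<le> x \<and> x \<le> 1 \<longrightarrow> qspProd \<Phi> x $ 1 $ 1 = poly P (of_real x))"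
proof -
  obtain \<Phi> \<gamma> where \<Phi>: "length \<Phi> = d" and \<Phi>_eq: "\<forall>x. -1 \<le> x \<and> x \<le> 1 \<longrightarrow>
      qspProd \<Phi> x ** expSigmaZ \<gamma> = qsp_unitary d (poly P x) (poly Q x) x"
    using qsp_factorization[OF assms(1,2,4,5)] by blast
  moreover have "\<Phi> \<noteq> []" using \<Phi> assms(3) by auto
  ultimately show ?thesis
    using qspProd_absorb_phase[of \<Phi> \<gamma>] by (auto simp: qsp_unitary_nth)
qed

lemma qspProd_nth_11_at_pm1:
  assumes "x = 1 \<or> x = -1"
  shows "qspProd \<Phi> x $ 1 $ 1 = of_real x ^ length \<Phi> * (\<Prod>j<length \<Phi>. exp (\<i> * of_real (\<Phi> ! j)))"
proof (induction \<Phi>)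
  case Nil
  then show ?case by (simp add: qspProd_def mat_def)
next
  case (Cons \<phi> \<Phi>)
  have "sqrt (1 - x\<^sup>2) = 0" using assms by auto
  then have "qspProd (\<phi> # \<Phi>) x $ 1 $ 1 = exp (\<i> * of_real \<phi>) * of_real x * qspProd \<Phi> x $ 1 $ 1"
    by (simp add: qspProd_def matrix_mult_2_nth expSigmaZ_def Rmat_def)
  then show ?case using Cons by (simp add: prod.lessThan_Suc_shift mult_ac del: prod.lessThan_Suc)
qed

text \<open>At \<open>x = 0\<close> each \<open>R(0)\<close> swaps the two rows, so the product alternates between
  diagonal and anti-diagonal and collects the alternating sum of the phases.\<close>

lemma qspProd_at_0:
  fixes \<Phi> :: "real list"
  defines "S \<equiv> \<lambda>\<Phi>. \<Sum>j<length \<Phi>. (-1)^j * \<Phi> ! j"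
  shows "(even (length \<Phi>) \<longrightarrow> qspProd \<Phi> 0 $ 1 $ 1 = exp (\<i> * of_real (S \<Phi>)) \<and> qspProd \<Phi> 0 $ 2 $ 1 = 0) \<and>
         (odd (length \<Phi>) \<longrightarrow> qspProd \<Phi> 0 $ 2 $ 1 = exp (- \<i> * of_real (S \<Phi>)) \<and> qspProd \<Phi> 0 $ 1 $ 1 = 0)"
proof (induction \<Phi>)
  case Nil
  then show ?case by (simp add: qspProd_def mat_def S_def)
next
  case (Cons \<phi> \<Phi>)
  have S: "S (\<phi> # \<Phi>) = \<phi> - S \<Phi>"
    by (simp add: S_def sum.lessThan_Suc_shift sum_negf del: sum.lessThan_Suc)
  have prod: "qspProd (\<phi> # \<Phi>) 0 = (expSigmaZ \<phi> ** Rmat 0) ** qspProd \<Phi> 0"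
    by (simp add: qspProd_def)
  have "qspProd (\<phi> # \<Phi>) 0 $ 1 $ 1 = exp (\<i> * of_real \<phi>) * qspProd \<Phi> 0 $ 2 $ 1"
    "qspProd (\<phi> # \<Phi>) 0 $ 2 $ 1 = exp (- \<i> * of_real \<phi>) * qspProd \<Phi> 0 $ 1 $ 1"
    unfolding prod by (simp_all add: matrix_mult_2_nth expSigmaZ_def Rmat_def)
  then show ?case
    using Cons.IH unfolding S by (auto simp: algebra_simps simp flip: exp_add)
qed

theorem mainTheorem5:
  fixes P :: "complex poly" and d :: nat
  assumes "d \<ge> 1"
    and "degree P = d"
    and "has_parity P d"
    and "\<forall>x::real. -1 \<le> x \<and> x \<le> 1 \<longrightarrow> norm (poly P (of_real x)) \<le> 1"
    and "\<forall>x::real. (x \<le> -1 \<or> 1 \<le> x) \<longrightarrow> norm (poly P (of_real x)) \<ge> 1"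
    and "even d \<longrightarrow> (\<forall>x::real.
           poly P (\<i> * of_real x) * poly (conj_poly P) (\<i> * of_real x) \<in> \<real> \<and>
           Re (poly P (\<i> * of_real x) * poly (conj_poly P) (\<i> * of_real x)) \<ge> 1)"
  shows "\<exists>\<Phi> :: real list. length \<Phi> = d \<and>
           (\<forall>x::real. -1 \<le> x \<and> x \<le> 1 \<longrightarrow> qspProd \<Phi> x $ 1 $ 1 = poly P (of_real x)) \<and>
           (\<forall>x::real. x \<in> {-1, 1} \<longrightarrow>
              poly P (of_real x) = of_real x ^ d * (\<Prod>j = 1..d. exp (\<i> * of_real (\<Phi> ! (j - 1))))) \<and>
           (even d \<longrightarrow>
              poly P 0 = exp (- \<i> * of_real (\<Sum>j = 1..d. (-1) ^ j * (\<Phi> ! (j - 1)))))"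
proof -
  obtain Q where "has_parity Q (Suc d)" "P * conj_poly P + [:1,0,-1:] * (Q * conj_poly Q) = 1"
    using complementary_poly_exists[OF assms(3-6)] by blast
  then obtain \<Phi> where \<Phi>: "length \<Phi> = d"
    and top: "\<And>x. -1 \<le> x \<Longrightarrow> x \<le> 1 \<Longrightarrow> qspProd \<Phi> x $ 1 $ 1 = poly P (of_real x)"
    using qsp_exists[of P Q d] assms(1-3) by auto
  have "poly P (of_real x) = of_real x ^ d * (\<Prod>j = 1..d. exp (\<i> * of_real (\<Phi> ! (j - 1))))"
    if "x \<in> {-1, 1}" for x
  proof -
    have "poly P (of_real x) = of_real x ^ d * (\<Prod>j<d. exp (\<i> * of_real (\<Phi> ! j)))"
      using that top[of x] qspProd_nth_11_at_pm1[of x \<Phi>] \<Phi> by auto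
    then show ?thesis by (simp add: prod.atLeast1_atMost_eq)
  qed
  moreover have "poly P 0 = exp (- \<i> * of_real (\<Sum>j = 1..d. (-1) ^ j * (\<Phi> ! (j - 1))))"
    if "even d"
  proof -
    have "poly P 0 = exp (\<i> * of_real (\<Sum>j<d. (-1)^j * \<Phi> ! j))"
      using that top[of 0] qspProd_at_0[of \<Phi>] \<Phi> by simp
    also have "(\<Sum>j<d. (-1)^j * \<Phi> ! j) = - (\<Sum>j = 1..d. (-1)^j * \<Phi> ! (j - 1))"
      by (simp add: sum.atLeast1_atMost_eq sum_negf)
    finally show ?thesis by simp
  qed
  ultimately show ?thesis using \<Phi> top by blast
qed

end
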